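(* Fix $n\ge1$. For every $\beta>0$ there exist compact sets $A,B\subset\mathbb{R}^n$ such that $$|A|\,|A+B+B|>\beta|A+B|^2.$$
   Context: $|\cdot|$ is $n$-dimensional Lebesgue measure and $+$ is Minkowski addition. *)

theory Defs
  imports "HOL-Analysis.Analysis" "HOL-Library.Set_Algebras"
begin

end

theory Submission
  imports Defs
begin

text \<open>
  Let A be a ball of radius R = 3m^2 together with K unit balls centred at the points
  k m^2 v (k < K) of a progression with step v, \<parallel>v\<parallel> = 3, and let B = {t v | t \<in> T} for the
  digit set T = {0..m-1} \<union> m {0..m-1}. Adding B keeps the big ball inside the ball of
  radius 2R and turns each small ball into at most |T| \<le> 2m unit balls, so |A + B| is at most
  a constant times R^n + K m. Since T + T contains every number below m^2, the set A + B + B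
  contains K m^2 disjoint unit balls. With K m = (2R)^n the ratio |A| |A + B + B| / |A + B|^2
  grows linearly in m.
\<close>

lemma image_set_plus:
  assumes "\<And>x y. f (x + y) = f x + f y"
  shows "f ` (X + Y) = f ` X + f ` Y"
  unfolding set_plus_image image_image by (force simp: assms image_iff)

lemma card_set_plus_le:
  assumes "finite X" "finite Y"
  shows "card (X + Y) \<le> card X * card Y"
  unfolding set_plus_image
  by (metis assms card_cartesian_product card_image_le finite_cartesian_product)

lemma compact_set_plus:
  fixes X Y :: "'a::real_normed_vector set"
  assumes "compact X" "compact Y"
  shows "compact (X + Y)"
proof -
  have "X + Y = {x + y | x y. x \<in> X \<and> y \<in> Y}" by (auto simp: set_plus_def)
  then show ?thesis using compact_sums[OF assms] by simp
qed

lemma UN_cball_plus: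
  fixes P Q :: "'a::real_normed_vector set"
  shows "(\<Union>c\<in>P. cball c r) + Q = (\<Union>c\<in>P + Q. cball c r)"
proof (intro equalityI subsetI)
  fix z assume "z \<in> (\<Union>c\<in>P. cball c r) + Q"
  then obtain c x q where "c \<in> P" "x \<in> cball c r" "q \<in> Q" "z = x + q"
    by (auto elim!: set_plus_elim)
  then show "z \<in> (\<Union>c\<in>P + Q. cball c r)"
    by (auto simp: dist_norm intro!: bexI[of _ "c + q"])
next
  fix z assume "z \<in> (\<Union>c\<in>P + Q. cball c r)"
  then obtain c q where "c \<in> P" "q \<in> Q" "z \<in> cball (c + q) r"
    by (auto elim!: set_plus_elim)
  then have "z - q \<in> (\<Union>c\<in>P. cball c r)" by (auto simp: dist_norm algebra_simps)
  then have "z - q + q \<in> (\<Union>c\<in>P. cball c r) + Q" using \<open>q \<in> Q\<close> by blast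
  then show "z \<in> (\<Union>c\<in>P. cball c r) + Q" by simp
qed

lemma cball_plus_subset:
  fixes Q :: "'a::real_normed_vector set"
  assumes "Q \<subseteq> cball 0 s"
  shows "cball 0 r + Q \<subseteq> cball 0 (r + s)"
proof
  fix z assume "z \<in> cball 0 r + Q"
  then obtain x q where "norm x \<le> r" "q \<in> Q" "z = x + q" by (auto elim!: set_plus_elim)
  moreover have "norm q \<le> s" using assms \<open>q \<in> Q\<close> by auto
  ultimately show "z \<in> cball 0 (r + s)" by (simp add: norm_triangle_le)
qed

lemma measure_UN_cball_separated:
  fixes P :: "'a::euclidean_space set"
  assumes "finite P" "r \<ge> 0" and separated: "\<And>c d. c \<in> P \<Longrightarrow> d \<in> P \<Longrightarrow> c \<noteq> d \<Longrightarrow> dist c d > 2 * r"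
  shows "measure lebesgue (\<Union>c\<in>P. cball c r) = card P * (unit_ball_vol DIM('a) * r ^ DIM('a))"
proof -
  have "disjoint_family_on (\<lambda>c. cball c r) P"
    unfolding disjoint_family_on_def
  proof (intro ballI impI)
    fix c d assume "c \<in> P" "d \<in> P" "c \<noteq> d"
    have "x \<notin> cball d r" if "x \<in> cball c r" for x
      using that separated[OF \<open>c \<in> P\<close> \<open>d \<in> P\<close> \<open>c \<noteq> d\<close>] dist_triangle[of c d x]
      by (auto simp: dist_commute)
    then show "cball c r \<inter> cball d r = {}" by blast
  qed
  then have "measure lebesgue (\<Union>c\<in>P. cball c r) = (\<Sum>c\<in>P. measure lebesgue (cball c r))"
    using assms by (intro measure_finite_Union) (auto simp: emeasure_eq_measure2)
  also have "\<dots> = card P * (unit_ball_vol DIM('a) * r ^ DIM('a))"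
    using assms by (simp add: content_cball)
  finally show ?thesis .
qed

definition progression_balls :: "'a::real_normed_vector \<Rightarrow> nat set \<Rightarrow> 'a set" where
  "progression_balls v S = (\<Union>c\<in>(\<lambda>N. real N *\<^sub>R v) ` S. cball c 1)"

lemma compact_progression_balls:
  fixes v :: "'a::{real_normed_vector, heine_borel}"
  shows "finite S \<Longrightarrow> compact (progression_balls v S)"
  unfolding progression_balls_def by (intro compact_UN) auto

lemma progression_balls_plus:
  "progression_balls v S + (\<lambda>N. real N *\<^sub>R v) ` T = progression_balls v (S + T)"
proof -
  have "(\<lambda>N. real N *\<^sub>R v) ` (S + T) = (\<lambda>N. real N *\<^sub>R v) ` S + (\<lambda>N. real N *\<^sub>R v) ` T"
    by (rule image_set_plus) (simp add: scaleR_add_left)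
  then show ?thesis by (simp only: progression_balls_def UN_cball_plus)
qed

lemma measure_progression_balls:
  fixes v :: "'a::euclidean_space"
  assumes "norm v > 2" "finite S"
  shows "measure lebesgue (progression_balls v S) = card S * unit_ball_vol DIM('a)"
proof -
  have dist_progression: "dist (real N *\<^sub>R v) (real M *\<^sub>R v) = \<bar>real N - real M\<bar> * norm v" for N M
    by (simp add: dist_norm flip: scaleR_diff_left)
  have "inj_on (\<lambda>N. real N *\<^sub>R v) S"
    using assms(1) by (intro inj_onI) (auto simp: scaleR_cancel_right)
  moreover have "dist c d > 2 * 1"
    if cd: "c \<in> (\<lambda>N. real N *\<^sub>R v) ` S" "d \<in> (\<lambda>N. real N *\<^sub>R v) ` S" "c \<noteq> d" for c d
  proof -
    obtain N M where cd_eq: "c = real N *\<^sub>R v" "d = real M *\<^sub>R v" "N \<noteq> M" using cd by auto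
    then have "1 \<le> \<bar>real N - real M\<bar>" by (cases "N < M") auto
    then have "norm v \<le> \<bar>real N - real M\<bar> * norm v"
      using mult_right_mono[OF _ norm_ge_zero[of v]] by fastforce
    then show ?thesis using assms(1) by (simp add: cd_eq dist_progression)
  qed
  ultimately show ?thesis
    using measure_UN_cball_separated[of "(\<lambda>N. real N *\<^sub>R v) ` S" 1] assms
    by (simp add: progression_balls_def card_image)
qed

lemma measure_ball_and_progression_sumsets:
  fixes v :: "'a::euclidean_space"
  assumes v: "norm v > 2" and fin: "finite S" "finite T"
    and R: "R \<ge> 0" "\<forall>t\<in>T. real t * norm v \<le> R"
  defines "A \<equiv> cball 0 R \<union> progression_balls v S" and "B \<equiv> (\<lambda>N. real N *\<^sub>R v) ` T"
  shows "compact A" and "compact B"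
    and "measure lebesgue A \<ge> unit_ball_vol DIM('a) * R ^ DIM('a)"
    and "measure lebesgue (A + B) \<le> unit_ball_vol DIM('a) * ((2 * R) ^ DIM('a) + card S * card T)"
    and "measure lebesgue (A + B + B) \<ge> unit_ball_vol DIM('a) * card (S + T + T)"
proof -
  have balls_plus_B: "progression_balls v X + B = progression_balls v (X + T)" for X
    unfolding B_def by (rule progression_balls_plus)
  have balls_lmeasurable: "progression_balls v X \<in> lmeasurable" if "finite X" for X
    using that by (intro lmeasurable_compact compact_progression_balls)
  have finite_sums: "finite (S + T)" "finite (S + T + T)" using fin by (auto intro: finite_set_plus)
  show "compact A" unfolding A_def using fin by (intro compact_Un compact_progression_balls) auto
  moreover show "compact B" unfolding B_def using fin by (simp add: finite_imp_compact)
  ultimately have lmeasurable: "A \<in> lmeasurable" "A + B \<in> lmeasurable" "A + B + B \<in> lmeasurable"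
    by (auto intro!: lmeasurable_compact compact_set_plus)
  have "measure lebesgue (cball (0::'a) R) \<le> measure lebesgue A"
    by (rule measure_mono_fmeasurable[OF _ fmeasurableD[OF lmeasurable_cball] lmeasurable(1)])
      (simp add: A_def)
  then show "measure lebesgue A \<ge> unit_ball_vol DIM('a) * R ^ DIM('a)"
    using R(1) by (simp add: content_cball)
  have "B \<subseteq> cball 0 R" using R(2) by (auto simp: B_def)
  then have "cball 0 R + B \<subseteq> cball 0 (2 * R)" using cball_plus_subset[of B R R] by (simp only: mult_2)
  then have "A + B \<subseteq> cball 0 (2 * R) \<union> progression_balls v (S + T)"
    unfolding A_def Un_set_plus balls_plus_B by blast
  then have "measure lebesgue (A + B) \<le> measure lebesgue (cball (0::'a) (2 * R) \<union> progression_balls v (S + T))"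
    using balls_lmeasurable[OF finite_sums(1)] lmeasurable(2)
    by (intro measure_mono_fmeasurable[OF _ _ fmeasurable.Un]) auto
  also have "\<dots> \<le> measure lebesgue (cball (0::'a) (2 * R)) + measure lebesgue (progression_balls v (S + T))"
    using balls_lmeasurable[OF finite_sums(1)] by (intro measure_Un_le) auto
  also have "measure lebesgue (cball (0::'a) (2 * R)) = unit_ball_vol DIM('a) * (2 * R) ^ DIM('a)"
    using R(1) by (simp add: content_cball)
  also have "measure lebesgue (progression_balls v (S + T)) = card (S + T) * unit_ball_vol DIM('a)"
    using v finite_sums(1) by (rule measure_progression_balls)
  also have "real (card (S + T)) \<le> card S * card T"
    using card_set_plus_le[OF fin] by (simp flip: of_nat_mult)
  finally show "measure lebesgue (A + B) \<le> unit_ball_vol DIM('a) * ((2 * R) ^ DIM('a) + card S * card T)"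
    by (simp add: distrib_left mult.commute)
  have "progression_balls v (S + T + T) = progression_balls v S + B + B" by (simp only: balls_plus_B)
  also have "\<dots> \<subseteq> A + B + B" unfolding A_def by (intro set_plus_mono2) auto
  finally have "measure lebesgue (progression_balls v (S + T + T)) \<le> measure lebesgue (A + B + B)"
    using balls_lmeasurable[OF finite_sums(2)] by (intro measure_mono_fmeasurable[OF _ _ lmeasurable(3)]) auto
  then show "measure lebesgue (A + B + B) \<ge> unit_ball_vol DIM('a) * card (S + T + T)"
    using measure_progression_balls[OF v finite_sums(2)] by (simp add: mult.commute)
qed

lemma multiples_plus_lessThan:
  fixes d K :: nat
  shows "(\<lambda>k. k * d) ` {..<K} + {..<d} = {..<K * d}"
proof (intro equalityI subsetI)
  fix N assume "N \<in> (\<lambda>k. k * d) ` {..<K} + {..<d}"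
  then obtain k i where "k < K" "i < d" "N = k * d + i" by (auto elim!: set_plus_elim)
  then have "N < Suc k * d" by simp
  also have "\<dots> \<le> K * d" using \<open>k < K\<close> by (intro mult_le_mono1) simp
  finally show "N \<in> {..<K * d}" by simp
next
  fix N assume "N \<in> {..<K * d}"
  then have "d > 0" by (auto intro: gr0I)
  then have "N div d < K" "N mod d < d" "N = N div d * d + N mod d"
    using \<open>N \<in> {..<K * d}\<close> by (auto simp: less_mult_imp_div_less)
  then show "N \<in> (\<lambda>k. k * d) ` {..<K} + {..<d}" by (metis imageI lessThan_iff set_plus_intro)
qed

definition digit_set :: "nat \<Rightarrow> nat set" where
  "digit_set m = {..<m} \<union> (\<lambda>j. j * m) ` {..<m}"

lemma card_digit_set_le: "card (digit_set m) \<le> 2 * m"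
  unfolding digit_set_def
  using card_Un_le[of "{..<m}" "(\<lambda>j. j * m) ` {..<m}"] card_image_le[of "{..<m}" "\<lambda>j. j * m"]
  by simp

lemma digit_set_le_square: "t \<in> digit_set m \<Longrightarrow> t \<le> m\<^sup>2"
  unfolding digit_set_def power2_eq_square
  by (auto intro: mult_le_mono1 le_trans[OF less_imp_le_nat le_square])

lemma lessThan_square_subset_digit_set_plus: "{..<m\<^sup>2} \<subseteq> digit_set m + digit_set m"
proof -
  have "(\<lambda>j. j * m) ` {..<m} + {..<m} \<subseteq> digit_set m + digit_set m"
    unfolding digit_set_def by (intro set_plus_mono2) auto
  then show ?thesis using multiples_plus_lessThan[of m m] by (simp add: power2_eq_square)
qed

lemma card_multiples_plus_digit_sets:
  "K * m\<^sup>2 \<le> card ((\<lambda>k. k * m\<^sup>2) ` {..<K} + digit_set m + digit_set m)"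
proof -
  let ?S = "(\<lambda>k. k * m\<^sup>2) ` {..<K}"
  have "{..<K * m\<^sup>2} = ?S + {..<m\<^sup>2}" by (rule multiples_plus_lessThan[symmetric])
  also have "\<dots> \<subseteq> ?S + (digit_set m + digit_set m)"
    using lessThan_square_subset_digit_set_plus by (intro set_plus_mono2) auto
  finally have "{..<K * m\<^sup>2} \<subseteq> ?S + digit_set m + digit_set m" by (simp add: add.assoc)
  moreover have "finite (?S + digit_set m + digit_set m)"
    by (intro finite_set_plus) (auto simp: digit_set_def)
  ultimately show ?thesis using card_mono[of "?S + digit_set m + digit_set m" "{..<K * m\<^sup>2}"] by simp
qed

lemma power_double_pred_mult:
  fixes c m :: nat
  assumes "n \<ge> 1"
  shows "c ^ n * m ^ (2 * n - 1) * m = (c * m\<^sup>2) ^ n"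
proof -
  have "m ^ (2 * n - 1) * m = m ^ (2 * n)"
    using assms by (simp flip: power_Suc2)
  then show ?thesis by (simp add: power_mult power_mult_distrib mult.assoc)
qed

lemma digit_construction_measures:
  fixes v :: "'a::euclidean_space" and m :: nat
  assumes v: "norm v = 3" and "m \<ge> 1"
  defines "n \<equiv> DIM('a)"
  defines "K \<equiv> 6 ^ n * m ^ (2 * n - 1)" and "R \<equiv> 3 * real m ^ 2"
  defines "S \<equiv> (\<lambda>k. k * m\<^sup>2) ` {..<K}" and "T \<equiv> digit_set m"
  defines "V \<equiv> unit_ball_vol n * (2 * R) ^ n"
    and "A \<equiv> cball 0 R \<union> progression_balls v S"
    and "B \<equiv> (\<lambda>N. real N *\<^sub>R v) ` T"
  shows "compact A" and "compact B" and "V > 0"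
    and "measure lebesgue A \<ge> V / 2 ^ n"
    and "measure lebesgue (A + B) \<le> 3 * V"
    and "measure lebesgue (A + B + B) \<ge> real m * V"
proof -
  have parameters: "norm v > 2" "finite S" "finite T" "R \<ge> 0"
    using v by (simp_all add: S_def T_def R_def digit_set_def)
  have "\<forall>t\<in>T. real t * norm v \<le> R"
    using digit_set_le_square[of _ m] v unfolding R_def T_def by (simp flip: of_nat_power)
  note bounds = measure_ball_and_progression_sumsets[OF parameters this, folded A_def B_def n_def]
  show "compact A" by (fact bounds(1))
  show "compact B" by (fact bounds(2))
  show "V > 0" unfolding V_def R_def using \<open>m \<ge> 1\<close> by simp
  have "V / 2 ^ n = unit_ball_vol n * R ^ n" unfolding V_def by (simp add: power_mult_distrib)
  then show "measure lebesgue A \<ge> V / 2 ^ n" using bounds(3) by linarith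
  have "real (K * m) = real ((6 * m\<^sup>2) ^ n)"
    unfolding K_def n_def using DIM_positive[where 'a='a] by (subst power_double_pred_mult) auto
  then have Km: "real K * real m = (2 * R) ^ n" unfolding R_def by simp
  have "real (card S * card T) \<le> real (K * (2 * m))"
    using card_image_le[of "{..<K}"] card_digit_set_le[of m] unfolding S_def T_def of_nat_le_iff
    by (intro mult_le_mono) auto
  then have "real (card S * card T) \<le> 2 * (2 * R) ^ n" using Km by simp
  then have "(2 * R) ^ n + card S * card T \<le> 3 * (2 * R) ^ n" by linarith
  have "measure lebesgue (A + B) \<le> unit_ball_vol n * ((2 * R) ^ n + card S * card T)"
    by (fact bounds(4))
  also have "\<dots> \<le> unit_ball_vol n * (3 * (2 * R) ^ n)"
    using \<open>(2 * R) ^ n + card S * card T \<le> 3 * (2 * R) ^ n\<close> by (intro mult_left_mono) auto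
  finally show "measure lebesgue (A + B) \<le> 3 * V" unfolding V_def by simp
  have "real (K * m\<^sup>2) \<le> real (card (S + T + T))"
    using card_multiples_plus_digit_sets[of K m] unfolding S_def T_def by (simp only: of_nat_le_iff)
  then have "unit_ball_vol n * (real K * real m ^ 2) \<le> unit_ball_vol n * card (S + T + T)"
    by (intro mult_left_mono) auto
  moreover have "real m * V = unit_ball_vol n * (real K * real m ^ 2)"
    unfolding V_def Km[symmetric] by (simp add: power2_eq_square ac_simps)
  ultimately show "measure lebesgue (A + B + B) \<ge> real m * V" using bounds(5) by linarith
qed

lemma product_gt_of_sumset_bounds:
  fixes a b c V \<beta> :: real
  assumes "V > 0" "\<beta> \<ge> 0" "real m > 9 * 2 ^ n * \<beta>"
    and "a \<ge> V / 2 ^ n" "0 \<le> b" "b \<le> 3 * V" "c \<ge> real m * V"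
  shows "a * c > \<beta> * b\<^sup>2"
proof -
  have "9 * \<beta> < real m / 2 ^ n" using assms(3) by (simp add: pos_less_divide_eq ac_simps)
  have "\<beta> * b\<^sup>2 \<le> \<beta> * (3 * V)\<^sup>2"
    using assms by (intro mult_left_mono power_mono) auto
  also have "\<dots> = 9 * \<beta> * V\<^sup>2" by (simp add: power_mult_distrib)
  also have "\<dots> < real m / 2 ^ n * V\<^sup>2"
    using \<open>9 * \<beta> < real m / 2 ^ n\<close> \<open>V > 0\<close> by (intro mult_strict_right_mono) auto
  also have "\<dots> = V / 2 ^ n * (real m * V)" by (simp add: power2_eq_square)
  also have "\<dots> \<le> a * c"
    using assms order_trans[of 0 "V / 2 ^ n" a] by (intro mult_mono) auto
  finally show ?thesis .
qed

theorem lemma4p19: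
  fixes \<beta> :: real
  assumes "\<beta> > 0"
  shows "\<exists>A B :: ('n::euclidean_space) set. compact A \<and> compact B \<and>
    measure lebesgue A * measure lebesgue (A + B + B) > \<beta> * (measure lebesgue (A + B))\<^sup>2"
proof -
  obtain m :: nat where m: "real m > 9 * 2 ^ DIM('n) * \<beta>" using reals_Archimedean2 by blast
  then have "m \<ge> 1" using assms by (cases m) (auto simp: mult_less_0_iff)
  obtain v :: 'n where "norm v = 3" using vector_choose_size[of 3] by auto
  note construction = digit_construction_measures[OF this \<open>m \<ge> 1\<close>]
  obtain A B :: "'n set" and V :: real where AB: "compact A" "compact B"
    and bounds: "V > 0" "measure lebesgue A \<ge> V / 2 ^ DIM('n)"
      "measure lebesgue (A + B) \<le> 3 * V" "measure lebesgue (A + B + B) \<ge> real m * V"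
    using construction by blast
  have "\<beta> * (measure lebesgue (A + B))\<^sup>2 < measure lebesgue A * measure lebesgue (A + B + B)"
    using assms by (intro product_gt_of_sumset_bounds[OF bounds(1) _ m bounds(2) _ bounds(3,4)]) auto
  with AB show ?thesis by blast
qed

end
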